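(* Let $(V,d)$ be a finite metric space with $|V|=n$, let $k\ge1$ be an integer, and let $\mathit{OPT}=\min_{C\subseteq V,\,|C|\le k}\max_{v\in V}d(v,C)$ be the optimal $k$-center radius. Suppose there are $m$ machines, each able to hold at most $c$ points, with $n/m\le c$ and $k\cdot m\le c$. Then the $k$-center problem on $V$ can be solved in two MapReduce rounds with approximation factor $4$, namely by the following procedure: in the first round, partition $V$ arbitrarily into sets $V_1,\dots,V_m$ with $|V_i|\le\lceil n/m\rceil$, and on each machine $i$ in parallel run Gonzalez's algorithm with parameter $k$ on $V_i$, obtaining a center set $C_i$; in the second round, send $C=\bigcup_i C_i$ (which has at most $k\cdot m\le c$ points) to a single machine and run Gonzalez's algorithm with parameter $k$ on $C$, obtaining $C^G$. The output $C^G$ has at most $k$ points and satisfies $\max_{v\in V} d(v,C^G)\le 4\cdot\mathit{OPT}$.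
   Context: Gonzalez's algorithm on a finite point set $S$ with parameter $k$: choose an arbitrary point of $S$ as the first center; then repeatedly choose as a new center a point of $S$ whose distance to the set of already chosen centers is maximum (ties broken arbitrarily), until $k$ centers have been chosen (or all of $S$, if $|S|\le k$). Here $d(v,C)=\min_{x\in C}d(v,x)$. *)

theory Defs
  imports Complex_Main
begin

definition metric_on :: "'a set \<Rightarrow> ('a \<Rightarrow> 'a \<Rightarrow> real) \<Rightarrow> bool" where
  "metric_on V d \<longleftrightarrow>
     (\<forall>x\<in>V. \<forall>y\<in>V. 0 \<le> d x y \<and> (d x y = 0 \<longleftrightarrow> x = y) \<and> d x y = d y x) \<and>
     (\<forall>x\<in>V. \<forall>y\<in>V. \<forall>z\<in>V. d x z \<le> d x y + d y z)"

definition dist_set :: "('a \<Rightarrow> 'a \<Rightarrow> real) \<Rightarrow> 'a \<Rightarrow> 'a set \<Rightarrow> real" where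
  "dist_set d v C = Min ((\<lambda>x. d v x) ` C)"

definition opt_radius :: "'a set \<Rightarrow> ('a \<Rightarrow> 'a \<Rightarrow> real) \<Rightarrow> nat \<Rightarrow> real" where
  "opt_radius V d k = Min {Max ((\<lambda>v. dist_set d v C) ` V) | C. C \<subseteq> V \<and> C \<noteq> {} \<and> card C \<le> k}"

text \<open>Partial runs of Gonzalez's algorithm on S: the list of centers chosen so far, in order.\<close>
inductive gonzalez_steps :: "('a \<Rightarrow> 'a \<Rightarrow> real) \<Rightarrow> 'a set \<Rightarrow> 'a list \<Rightarrow> bool"
  for d S where
  start: "gonzalez_steps d S []"
| first: "x \<in> S \<Longrightarrow> gonzalez_steps d S [x]"
| step: "gonzalez_steps d S cs \<Longrightarrow> cs \<noteq> [] \<Longrightarrow> x \<in> S \<Longrightarrow>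
         (\<forall>y\<in>S. dist_set d y (set cs) \<le> dist_set d x (set cs)) \<Longrightarrow>
         gonzalez_steps d S (cs @ [x])"

definition gonzalez :: "('a \<Rightarrow> 'a \<Rightarrow> real) \<Rightarrow> 'a set \<Rightarrow> nat \<Rightarrow> 'a set \<Rightarrow> bool" where
  "gonzalez d S k C \<longleftrightarrow>
     (\<exists>cs. gonzalez_steps d S cs \<and> length cs = min k (card S) \<and> C = set cs)"

end

theory Submission
  imports Defs
begin

text \<open>Let \<open>C\<^sup>*\<close> be an optimal solution, of radius \<open>r = OPT\<close>. If Gonzalez's algorithm, run on a
  subset \<open>S\<close> of \<open>V\<close>, left some point of \<open>S\<close> at distance more than \<open>2r\<close> from its output, then
  by the greedy choice all chosen centers together with that point would be \<open>k + 1\<close> points pairwise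
  more than \<open>2r\<close> apart; two of them share their nearest point of \<open>C\<^sup>*\<close>, contradicting the triangle
  inequality. Hence each \<open>C\<^sub>i\<close> is within \<open>2r\<close> of \<open>V\<^sub>i\<close> and \<open>C\<^sup>G\<close> is within \<open>2r\<close> of \<open>\<Union>C\<^sub>i\<close>;
  one more triangle inequality gives \<open>4r\<close>.\<close>

lemma metric_on_self: "metric_on V d \<Longrightarrow> x \<in> V \<Longrightarrow> d x x = 0"
  unfolding metric_on_def by blast

lemma metric_on_nonneg: "metric_on V d \<Longrightarrow> x \<in> V \<Longrightarrow> y \<in> V \<Longrightarrow> 0 \<le> d x y"
  unfolding metric_on_def by blast

lemma metric_on_sym: "metric_on V d \<Longrightarrow> x \<in> V \<Longrightarrow> y \<in> V \<Longrightarrow> d x y = d y x"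
  unfolding metric_on_def by blast

lemma metric_on_triangle:
  "metric_on V d \<Longrightarrow> x \<in> V \<Longrightarrow> y \<in> V \<Longrightarrow> z \<in> V \<Longrightarrow> d x z \<le> d x y + d y z"
  unfolding metric_on_def by blast

lemma dist_set_le: "finite C \<Longrightarrow> x \<in> C \<Longrightarrow> dist_set d v C \<le> d v x"
  unfolding dist_set_def by (rule Min_le) auto

lemma dist_set_attained:
  assumes "finite C" "C \<noteq> {}"
  obtains x where "x \<in> C" "dist_set d v C = d v x"
proof -
  have "Min ((\<lambda>x. d v x) ` C) \<in> (\<lambda>x. d v x) ` C"
    using assms by (intro Min_in) auto
  then show ?thesis using that unfolding dist_set_def by auto
qed

lemma dist_set_insert:
  "finite C \<Longrightarrow> C \<noteq> {} \<Longrightarrow> dist_set d v (insert x C) = min (d v x) (dist_set d v C)"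
  unfolding dist_set_def by (simp add: Min_insert)

lemma dist_set_nonneg:
  assumes "metric_on V d" "v \<in> V" "C \<subseteq> V" "finite C" "C \<noteq> {}"
  shows "0 \<le> dist_set d v C"
proof -
  obtain x where "x \<in> C" "dist_set d v C = d v x"
    using dist_set_attained[OF assms(4,5)] .
  moreover have "x \<in> V" using \<open>x \<in> C\<close> assms(3) by blast
  ultimately show ?thesis using metric_on_nonneg[OF assms(1,2)] by simp
qed

lemma dist_set_member_le_0:
  "metric_on V d \<Longrightarrow> v \<in> V \<Longrightarrow> finite C \<Longrightarrow> v \<in> C \<Longrightarrow> dist_set d v C \<le> 0"
  using dist_set_le[of C v d v] metric_on_self[of V d v] by simp

lemma dist_set_triangle:
  assumes "metric_on V d" "C \<subseteq> V" "finite C" "C \<noteq> {}" "v \<in> V" "x \<in> V"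
  shows "dist_set d v C \<le> d v x + dist_set d x C"
proof -
  obtain y where y: "y \<in> C" "dist_set d x C = d x y"
    using dist_set_attained[OF assms(3,4)] .
  have "dist_set d v C \<le> d v y" using dist_set_le[OF assms(3) y(1)] .
  also have "\<dots> \<le> d v x + d x y"
    using y(1) assms(2) by (intro metric_on_triangle[OF assms(1,5,6)]) blast
  finally show ?thesis using y(2) by simp
qed

text \<open>Pigeonhole: map each point to a nearest point of \<open>C\<close>; two separated points cannot share it.\<close>
lemma card_le_if_separated_and_covered:
  assumes met: "metric_on V d" and "A \<subseteq> V" "C \<subseteq> V" "finite C" "C \<noteq> {}"
    and cov: "\<forall>u\<in>A. dist_set d u C \<le> r"
    and sep: "pairwise (\<lambda>a b. 2 * r < d a b) A"
  shows "card A \<le> card C"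
proof -
  define f where "f u = (SOME z. z \<in> C \<and> dist_set d u C = d u z)" for u
  have f: "f u \<in> C" "dist_set d u C = d u (f u)" for u
    using someI_ex[of "\<lambda>z. z \<in> C \<and> dist_set d u C = d u z"]
      dist_set_attained[OF assms(4,5), of d u] unfolding f_def by blast+
  have "inj_on f A"
  proof (rule inj_onI, rule ccontr)
    fix a b assume ab: "a \<in> A" "b \<in> A" "f a = f b" "a \<noteq> b"
    have V: "a \<in> V" "b \<in> V" "f a \<in> V" using ab(1,2) f(1) assms(2,3) by blast+
    have "d a b \<le> d a (f a) + d (f b) b"
      using metric_on_triangle[OF met V(1,3,2)] ab(3) by simp
    also have "\<dots> = d a (f a) + d b (f b)"
      using metric_on_sym[OF met V(2,3)] ab(3) by simp
    also have "\<dots> \<le> 2 * r"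
    proof -
      have "dist_set d a C \<le> r" "dist_set d b C \<le> r" using cov ab(1,2) by blast+
      then show ?thesis using f(2)[of a] f(2)[of b] by linarith
    qed
    finally show False using sep ab unfolding pairwise_def by force
  qed
  then show ?thesis using f(1) assms(4) by (intro card_inj_on_le) auto
qed

lemma gonzalez_steps_subset: "gonzalez_steps d S cs \<Longrightarrow> set cs \<subseteq> S"
  by (induction rule: gonzalez_steps.induct) auto

text \<open>A point of \<open>S\<close> far from the centers chosen so far witnesses that each greedy choice was at
  least as far from its predecessors.\<close>
lemma gonzalez_steps_separated:
  assumes "gonzalez_steps d S cs" "S \<subseteq> V" "metric_on V d" "0 \<le> t" "v \<in> S"
    "t < dist_set d v (set cs)"
  shows "distinct cs \<and> pairwise (\<lambda>a b. t < d a b) (set cs)"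
  using assms
proof (induction rule: gonzalez_steps.induct)
  case (step cs x)
  have fin: "finite (set cs)" "set cs \<noteq> {}" using step.hyps(2) by auto
  have "t < dist_set d v (set cs)"
    using step.prems(5) dist_set_insert[OF fin] by simp
  with step have IH: "distinct cs \<and> pairwise (\<lambda>a b. t < d a b) (set cs)" by blast
  have x_far: "t < dist_set d x (set cs)"
    using step.hyps(4) step.prems(4) \<open>t < dist_set d v (set cs)\<close> by fastforce
  have xV: "x \<in> V" and csV: "set cs \<subseteq> V"
    using step.hyps(3) step.prems(1) gonzalez_steps_subset[OF step.hyps(1)] by auto
  have "x \<notin> set cs"
    using dist_set_member_le_0[OF step.prems(2) xV fin(1)] x_far step.prems(3) by force
  moreover have "t < d x a" "t < d a x" if "a \<in> set cs" for a
    using dist_set_le[OF fin(1) that, of d x] x_far metric_on_sym[OF step.prems(2) xV, of a]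
      that csV by auto
  ultimately show ?case using IH by (auto simp: pairwise_insert)
qed simp_all

lemma gonzalez_card_le: "gonzalez d S k C \<Longrightarrow> card C \<le> k"
  unfolding gonzalez_def by (metis card_length min.bounded_iff)

lemma gonzalez_subset: "gonzalez d S k C \<Longrightarrow> C \<subseteq> S"
  unfolding gonzalez_def using gonzalez_steps_subset by blast

lemma gonzalez_finite: "gonzalez d S k C \<Longrightarrow> finite C"
  unfolding gonzalez_def by auto

lemma gonzalez_nonempty:
  "gonzalez d S k C \<Longrightarrow> finite S \<Longrightarrow> S \<noteq> {} \<Longrightarrow> 1 \<le> k \<Longrightarrow> C \<noteq> {}"
  unfolding gonzalez_def by (auto simp: card_gt_0_iff Suc_le_eq min_def split: if_splits)

text \<open>The covering set \<open>C'\<close> lives in the ambient space \<open>V\<close> and need not meet \<open>S\<close>.\<close>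
lemma gonzalez_dist_le:
  assumes met: "metric_on V d" and "finite V" "S \<subseteq> V" and g: "gonzalez d S k C"
    and C': "C' \<subseteq> V" "C' \<noteq> {}" "card C' \<le> k"
    and cov: "\<forall>u\<in>V. dist_set d u C' \<le> r" and v: "v \<in> S"
  shows "dist_set d v C \<le> 2 * r"
proof (rule ccontr)
  assume far: "\<not> dist_set d v C \<le> 2 * r"
  obtain cs where cs: "gonzalez_steps d S cs" "length cs = min k (card S)" "C = set cs"
    using g unfolding gonzalez_def by auto
  have fin: "finite C'" "finite S" using assms(2,3) C'(1) finite_subset by auto
  have vV: "v \<in> V" using v assms(3) by blast
  have r: "0 \<le> r" using cov dist_set_nonneg[OF met vV C'(1) fin(1) C'(2)] vV by force
  have sep: "distinct cs" "pairwise (\<lambda>a b. 2 * r < d a b) (set cs)"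
    using gonzalez_steps_separated[OF cs(1) assms(3) met _ v, of "2 * r"] far r cs(3) by auto
  have csS: "set cs \<subseteq> S" using gonzalez_steps_subset[OF cs(1)] .
  have v_new: "v \<notin> set cs" using dist_set_member_le_0[OF met vV] far r cs(3) by force
  show False
  proof (cases "card S \<le> k")
    case True
    then have "set cs = S"
      using card_subset_eq[OF fin(2) csS] distinct_card[OF sep(1)] cs(2) by simp
    then show False using v_new v by simp
  next
    case False
    let ?A = "insert v (set cs)"
    have "2 * r < d v c \<and> 2 * r < d c v" if "c \<in> set cs" for c
    proof -
      have "c \<in> V" using that csS assms(3) by blast
      then show ?thesis
        using dist_set_le[of "set cs" c d v] that far cs(3) metric_on_sym[OF met vV] by force
    qed
    then have "pairwise (\<lambda>a b. 2 * r < d a b) ?A"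
      using sep(2) by (simp add: pairwise_insert)
    then have "card ?A \<le> card C'"
      using csS assms(3) vV cov by (intro card_le_if_separated_and_covered[OF met _ C'(1) fin(1) C'(2)]) auto
    moreover have "card ?A = k + 1"
      using v_new distinct_card[OF sep(1)] cs(2) False by simp
    ultimately show False using C'(3) by simp
  qed
qed

lemma opt_radius_attained:
  assumes "finite V" "V \<noteq> {}" "1 \<le> k"
  obtains C where "C \<subseteq> V" "C \<noteq> {}" "card C \<le> k" "\<forall>u\<in>V. dist_set d u C \<le> opt_radius V d k"
proof -
  define F where "F = {C. C \<subseteq> V \<and> C \<noteq> {} \<and> card C \<le> k}"
  define g where "g C = Max ((\<lambda>v. dist_set d v C) ` V)" for C
  have opt: "opt_radius V d k = Min (g ` F)"
    unfolding opt_radius_def F_def g_def by (simp add: setcompr_eq_image)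
  have "finite F" using assms(1) unfolding F_def by simp
  moreover obtain v where "v \<in> V" using assms(2) by blast
  then have "{v} \<in> F" using assms(3) unfolding F_def by simp
  ultimately have "Min (g ` F) \<in> g ` F" by (intro Min_in) auto
  then obtain C where C: "C \<in> F" "opt_radius V d k = g C" using opt by auto
  show ?thesis
  proof (rule that)
    show "C \<subseteq> V" "C \<noteq> {}" "card C \<le> k" using C(1) unfolding F_def by auto
    show "\<forall>u\<in>V. dist_set d u C \<le> opt_radius V d k"
      unfolding C(2) g_def using assms(1) by simp
  qed
qed

theorem lemma2:
  fixes V :: "'a set" and d :: "'a \<Rightarrow> 'a \<Rightarrow> real"
    and n k m c :: nat
    and P :: "nat \<Rightarrow> 'a set" and Cs :: "nat \<Rightarrow> 'a set" and CG :: "'a set"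
  assumes "finite V" and "metric_on V d" and "card V = n"
    and "k \<ge> 1" and "m \<ge> 1"
    and "real n / real m \<le> real c" and "k * m \<le> c"
    and "\<forall>i<m. \<forall>j<m. i \<noteq> j \<longrightarrow> P i \<inter> P j = {}"
    and "(\<Union>i<m. P i) = V"
    and "\<forall>i<m. card (P i) \<le> nat \<lceil>real n / real m\<rceil>"
    and "\<forall>i<m. gonzalez d (P i) k (Cs i)"
    and "gonzalez d (\<Union>i<m. Cs i) k CG"
  shows "card (\<Union>i<m. Cs i) \<le> k * m \<and> card CG \<le> k \<and>
         (\<forall>v\<in>V. dist_set d v CG \<le> 4 * opt_radius V d k)"
proof (intro conjI ballI)
  have "card (\<Union>i<m. Cs i) \<le> (\<Sum>i<m. card (Cs i))" by (rule card_UN_le) simp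
  also have "\<dots> \<le> (\<Sum>i<m. k)" using assms(11) gonzalez_card_le by (intro sum_mono) blast
  finally show "card (\<Union>i<m. Cs i) \<le> k * m" by (simp add: mult.commute)
  show "card CG \<le> k" using assms(12) gonzalez_card_le by blast
  fix v assume v: "v \<in> V"
  let ?U = "\<Union>i<m. Cs i" and ?r = "opt_radius V d k"
  obtain C' where C': "C' \<subseteq> V" "C' \<noteq> {}" "card C' \<le> k" "\<forall>u\<in>V. dist_set d u C' \<le> ?r"
    using opt_radius_attained[OF assms(1) _ assms(4)] v by blast
  obtain i where i: "i < m" "v \<in> P i" using v assms(9) by blast
  have gi: "gonzalez d (P i) k (Cs i)" using assms(11) i(1) by blast
  have P_V: "P i \<subseteq> V" using i(1) assms(9) by blast
  have U_V: "?U \<subseteq> V" using assms(9,11) gonzalez_subset by fastforce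
  have "Cs i \<noteq> {}"
    using gonzalez_nonempty[OF gi finite_subset[OF P_V assms(1)] _ assms(4)] i(2) by blast
  then obtain x where x: "x \<in> Cs i" "dist_set d v (Cs i) = d v x"
    using dist_set_attained[OF gonzalez_finite[OF gi]] by metis
  have x_U: "x \<in> ?U" using x(1) i(1) by blast
  have CG: "finite CG" "CG \<noteq> {}" "CG \<subseteq> V"
    using gonzalez_finite[OF assms(12)] gonzalez_subset[OF assms(12)] U_V x_U
      gonzalez_nonempty[OF assms(12) finite_subset[OF U_V assms(1)] _ assms(4)] by auto
  have "d v x \<le> 2 * ?r"
    using gonzalez_dist_le[OF assms(2,1) P_V gi C' i(2)] x(2) by simp
  moreover have "dist_set d x CG \<le> 2 * ?r"
    using gonzalez_dist_le[OF assms(2,1) U_V assms(12) C' x_U] .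
  moreover have "dist_set d v CG \<le> d v x + dist_set d x CG"
    using dist_set_triangle[OF assms(2) CG(3,1,2) v] x_U U_V by blast
  ultimately show "dist_set d v CG \<le> 4 * ?r" by linarith
qed

end
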